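(* Let $\alpha \in (0,1)$. Let $f:[0,1]\to\mathbb{R}_{\ge 0}$ be convex with $f(1-\alpha)=0$, and let $f':[0,1]\to\mathbb{R}$ be a subderivative of $f$ (i.e. $f'(p)\in\partial f(p)$ for every $p\in[0,1]$) satisfying $f'(1-\alpha)=0$. Define $$\ell(p,y) := -f(p)-(y-p)f'(p), \qquad p\in[0,1],\ y\in\{0,1\}.$$ Then $\ell$ is a proper score, and $$\ell\text{-ERT} = \mathbb{E}_X\big[f(p(X))\big].$$
   Context: Let $(X,Y)\sim\mathbb{P}_{X,Y}$ on $\mathcal{X}\times\mathcal{Y}$, and let $C_\alpha(\cdot)$ be a prediction set rule mapping each $x\in\mathcal{X}$ to a subset $C_\alpha(x)\subseteq\mathcal{Y}$ (measurable). Let $Z:=\mathbf{1}\{Y\in C_\alpha(X)\}\in\{0,1\}$ and define the conditional coverage $p(x):=\mathbb{P}(Z=1\mid X=x)=\mathbb{P}(Y\in C_\alpha(X)\mid X=x)$. A function $\ell:[0,1]\times\{0,1\}\to\mathbb{R}$ is a proper score if for all $p,q\in[0,1]$, $\mathbb{E}_{y\sim \mathrm{Bernoulli}(q)}[\ell(p,y)]\ge \mathbb{E}_{y\sim\mathrm{Bernoulli}(q)}[\ell(q,y)]$. For a (measurable) predictor $h:\mathcal{X}\to[0,1]$, its risk is $\mathcal{R}_\ell(h):=\mathbb{E}_{X,Z}[\ell(h(X),Z)]$; a constant $c\in[0,1]$ is viewed as the constant predictor. The excess risk of the target coverage is $\ell\text{-ERT}:=\mathcal{R}_\ell(1-\alpha)-\mathcal{R}_\ell(p)$.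 All expectations are assumed to be well-defined. *)

theory Defs
  imports "HOL-Probability.Probability"
begin

definition subderivative_on :: "(real \<Rightarrow> real) \<Rightarrow> (real \<Rightarrow> real) \<Rightarrow> real set \<Rightarrow> bool" where
  "subderivative_on f g S \<longleftrightarrow> (\<forall>p\<in>S. \<forall>q\<in>S. f q \<ge> f p + g p * (q - p))"

text \<open>Proper score l : [0,1] x {0,1} -> R; the label y is encoded as the real 0 or 1.\<close>
definition proper_score :: "(real \<Rightarrow> real \<Rightarrow> real) \<Rightarrow> bool" where
  "proper_score l \<longleftrightarrow> (\<forall>p\<in>{0..1}. \<forall>q\<in>{0..1}.
     measure_pmf.expectation (bernoulli_pmf q) (\<lambda>b. l p (of_bool b))
       \<ge> measure_pmf.expectation (bernoulli_pmf q) (\<lambda>b. l q (of_bool b)))"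

definition risk :: "'w measure \<Rightarrow> ('w \<Rightarrow> 'x) \<Rightarrow> ('w \<Rightarrow> real) \<Rightarrow> (real \<Rightarrow> real \<Rightarrow> real)
    \<Rightarrow> ('x \<Rightarrow> real) \<Rightarrow> real" where
  "risk M X Z l h = (\<integral>\<omega>. l (h (X \<omega>)) (Z \<omega>) \<partial>M)"

end

theory Submission
  imports Defs
begin

(*
  Propriety is the subgradient inequality: under Bernoulli(q) the forecast a has expected
  score -(f a + f' a * (q - a)), minus the supporting line of f at a evaluated at q, and
  this is at least -f q.  The score of the constant forecast 1 - alpha vanishes identically,
  while the risk of p equals -E[f(p(X))] - E[(Z - p(X)) f'(p(X))].  The last term is zero
  because p(X) is the conditional mean of Z given X and f'(p(X)) is a bounded function
  of X: subgradients are monotone, hence measurable and bounded on [0,1].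
*)

lemma subderivative_on_mono:
  assumes "subderivative_on f g S"
  shows "mono_on S g"
proof (rule mono_onI)
  fix a b assume "a \<in> S" "b \<in> S" "a \<le> b"
  with assms have "f b \<ge> f a + g a * (b - a)" "f a \<ge> f b + g b * (a - b)"
    by (auto simp: subderivative_on_def)
  then have "(g a - g b) * (b - a) \<le> 0"
    by (simp add: algebra_simps)
  with \<open>a \<le> b\<close> show "g a \<le> g b"
    by (cases "a = b") (auto simp: mult_le_0_iff)
qed

lemma mono_on_abs_le_max:
  fixes g :: "'a::order \<Rightarrow> 'b::linordered_idom"
  assumes "mono_on {a..b} g" "t \<in> {a..b}"
  shows "\<bar>g t\<bar> \<le> max \<bar>g a\<bar> \<bar>g b\<bar>"
proof -
  have "g a \<le> g t" "g t \<le> g b"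
    using assms by (auto intro!: mono_onD[OF assms(1)])
  then show ?thesis by auto
qed

lemma borel_measurable_mono_on_comp:
  fixes g :: "real \<Rightarrow> real"
  assumes "mono_on S g" "p \<in> borel_measurable N" "\<And>x. x \<in> space N \<Longrightarrow> p x \<in> S"
  shows "(\<lambda>x. g (p x)) \<in> borel_measurable N"
proof -
  have "p \<in> measurable N (restrict_space borel S)"
    using assms(2,3) by (intro measurable_restrict_space2) auto
  then show ?thesis
    using borel_measurable_mono_on_fnc[OF assms(1)] by (rule measurable_compose)
qed

lemma proper_score_subgradient_score:
  assumes "subderivative_on f g {0..1}"
  shows "proper_score (\<lambda>q y. - f q - (y - q) * g q)"
  unfolding proper_score_def
proof (intro ballI)
  fix a q :: real assume "a \<in> {0..1}" "q \<in> {0..1}"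
  with assms have "f q \<ge> f a + g a * (q - a)"
    by (auto simp: subderivative_on_def)
  with \<open>q \<in> {0..1}\<close> show
    "measure_pmf.expectation (bernoulli_pmf q) (\<lambda>b. - f a - (of_bool b - a) * g a)
      \<ge> measure_pmf.expectation (bernoulli_pmf q) (\<lambda>b. - f q - (of_bool b - q) * g q)"
    by (simp add: algebra_simps)
qed

lemma borel_measurable_indicator_graph:
  fixes X :: "'w \<Rightarrow> 'x" and Y :: "'w \<Rightarrow> 'y"
  assumes "X \<in> measurable M N" "Y \<in> measurable M K"
    "{(x, y). y \<in> C x} \<in> sets (N \<Otimes>\<^sub>M K)"
  shows "(\<lambda>\<omega>. indicator (C (X \<omega>)) (Y \<omega>) :: real) \<in> borel_measurable M"
proof -
  have "(\<lambda>\<omega>. indicator {(x, y). y \<in> C x} (X \<omega>, Y \<omega>) :: real) \<in> borel_measurable M"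
    using assms by (intro measurable_compose[OF measurable_Pair borel_measurable_indicator])
  then show ?thesis by (simp add: indicator_def)
qed

lemma distr_density_eq_density_distr:
  assumes [measurable]: "X \<in> measurable M N" "p \<in> borel_measurable N"
    and Z_nonneg: "\<And>\<omega>. 0 \<le> Z \<omega>" and Z_int: "integrable M Z"
    and p_nonneg: "\<And>x. 0 \<le> p x" and pX_int: "integrable M (\<lambda>\<omega>. p (X \<omega>))"
    and cond_mean: "\<And>A. A \<in> sets N \<Longrightarrow>
      (\<integral>\<omega>. indicator A (X \<omega>) * Z \<omega> \<partial>M) = (\<integral>\<omega>. indicator A (X \<omega>) * p (X \<omega>) \<partial>M)"
  shows "distr (density M Z) N X = density (distr M N X) p"
proof (rule measure_eqI)
  fix A assume "A \<in> sets (distr (density M Z) N X)"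
  then have A[measurable]: "A \<in> sets N" by simp
  have [measurable]: "Z \<in> borel_measurable M"
    using Z_int by (rule borel_measurable_integrable)
  have int_Z: "integrable M (\<lambda>\<omega>. indicator A (X \<omega>) * Z \<omega>)"
    by (rule Bochner_Integration.integrable_bound[OF Z_int]) (auto simp: indicator_def Z_nonneg)
  have int_p: "integrable M (\<lambda>\<omega>. indicator A (X \<omega>) * p (X \<omega>))"
    by (rule Bochner_Integration.integrable_bound[OF pX_int]) (auto simp: indicator_def p_nonneg)
  have "emeasure (distr (density M Z) N X) A
      = (\<integral>\<^sup>+ \<omega>. ennreal (indicator A (X \<omega>) * Z \<omega>) \<partial>M)"
    by (auto simp: emeasure_distr emeasure_density indicator_def intro!: nn_integral_cong)
  also have "\<dots> = ennreal (\<integral>\<omega>. indicator A (X \<omega>) * p (X \<omega>) \<partial>M)"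
    using nn_integral_eq_integral[OF int_Z] cond_mean[OF A] by (simp add: Z_nonneg)
  also have "\<dots> = (\<integral>\<^sup>+ \<omega>. ennreal (indicator A (X \<omega>) * p (X \<omega>)) \<partial>M)"
    using nn_integral_eq_integral[OF int_p] by (simp add: p_nonneg)
  also have "\<dots> = emeasure (density (distr M N X) p) A"
    by (auto simp: emeasure_density nn_integral_distr indicator_def intro!: nn_integral_cong)
  finally show "emeasure (distr (density M Z) N X) A = emeasure (density (distr M N X) p) A" .
qed simp

lemma integral_mult_conditional_mean:
  fixes Z :: "'a \<Rightarrow> real"
  assumes X: "X \<in> measurable M N" and p: "p \<in> borel_measurable N"
    and Z_nonneg: "\<And>\<omega>. 0 \<le> Z \<omega>" and Z_int: "integrable M Z"
    and p_nonneg: "\<And>x. 0 \<le> p x" and pX_int: "integrable M (\<lambda>\<omega>. p (X \<omega>))"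
    and cond_mean: "\<And>A. A \<in> sets N \<Longrightarrow>
      (\<integral>\<omega>. indicator A (X \<omega>) * Z \<omega> \<partial>M) = (\<integral>\<omega>. indicator A (X \<omega>) * p (X \<omega>) \<partial>M)"
    and h: "h \<in> borel_measurable N"
  shows "(\<integral>\<omega>. Z \<omega> * h (X \<omega>) \<partial>M) = (\<integral>\<omega>. p (X \<omega>) * h (X \<omega>) \<partial>M)"
proof -
  have [measurable]: "Z \<in> borel_measurable M"
    using Z_int by (rule borel_measurable_integrable)
  note [measurable] = X p h
  have "(\<integral>\<omega>. Z \<omega> * h (X \<omega>) \<partial>M) = integral\<^sup>L (distr (density M Z) N X) h"
    by (simp add: integral_density integral_distr Z_nonneg)
  also have "\<dots> = integral\<^sup>L (density (distr M N X) p) h"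
    by (simp only: distr_density_eq_density_distr[OF X p Z_nonneg Z_int p_nonneg pX_int
          cond_mean])
  also have "\<dots> = (\<integral>\<omega>. p (X \<omega>) * h (X \<omega>) \<partial>M)"
    by (simp add: integral_density integral_distr p_nonneg)
  finally show ?thesis .
qed

lemma residual_mult_conditional_mean:
  fixes Z :: "'a \<Rightarrow> real" and h :: "'b \<Rightarrow> real"
  assumes "prob_space M" and X: "X \<in> measurable M N"
    and Z: "Z \<in> borel_measurable M" "\<And>\<omega>. Z \<omega> \<in> {0..1}"
    and p: "p \<in> borel_measurable N" "\<And>x. p x \<in> {0..1}"
    and cond_mean: "\<And>A. A \<in> sets N \<Longrightarrow>
      (\<integral>\<omega>. indicator A (X \<omega>) * Z \<omega> \<partial>M) = (\<integral>\<omega>. indicator A (X \<omega>) * p (X \<omega>) \<partial>M)"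
    and h: "h \<in> borel_measurable N" "\<And>x. \<bar>h x\<bar> \<le> B"
  shows "integrable M (\<lambda>\<omega>. (Z \<omega> - p (X \<omega>)) * h (X \<omega>))"
    and "(\<integral>\<omega>. (Z \<omega> - p (X \<omega>)) * h (X \<omega>) \<partial>M) = 0"
proof -
  interpret prob_space M by fact
  note [measurable] = X Z(1) p(1) h(1)
  have Z_abs: "\<bar>Z \<omega>\<bar> \<le> 1" and pX_abs: "\<bar>p (X \<omega>)\<bar> \<le> 1" for \<omega>
    using Z(2)[of \<omega>] p(2)[of "X \<omega>"] by auto
  have int_Z: "integrable M Z" and int_pX: "integrable M (\<lambda>\<omega>. p (X \<omega>))"
    using Z_abs pX_abs by (auto intro: integrable_const_bound[where B=1])
  have "\<bar>Z \<omega> * h (X \<omega>)\<bar> \<le> B" "\<bar>p (X \<omega>) * h (X \<omega>)\<bar> \<le> B" for \<omega>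
    using mult_mono[OF Z_abs h(2)] mult_mono[OF pX_abs h(2)] by (simp_all add: abs_mult)
  then have int_Zh: "integrable M (\<lambda>\<omega>. Z \<omega> * h (X \<omega>))"
    and int_ph: "integrable M (\<lambda>\<omega>. p (X \<omega>) * h (X \<omega>))"
    by (auto intro: integrable_const_bound[where B=B])
  show "integrable M (\<lambda>\<omega>. (Z \<omega> - p (X \<omega>)) * h (X \<omega>))"
    using int_Zh int_ph by (simp add: left_diff_distrib)
  show "(\<integral>\<omega>. (Z \<omega> - p (X \<omega>)) * h (X \<omega>) \<partial>M) = 0"
    using integral_mult_conditional_mean[OF X p(1) _ int_Z _ int_pX cond_mean h(1)]
      Z(2) p(2) int_Zh int_ph
    by (simp add: left_diff_distrib)
qed

theorem proposition1:
  fixes M :: "'w measure" and N :: "'x measure" and K :: "'y measure"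
    and X :: "'w \<Rightarrow> 'x" and Y :: "'w \<Rightarrow> 'y" and C :: "'x \<Rightarrow> 'y set"
    and p :: "'x \<Rightarrow> real" and f f' :: "real \<Rightarrow> real" and \<alpha> :: real
  assumes "prob_space M"
    and X_meas: "X \<in> measurable M N" and Y_meas: "Y \<in> measurable M K"
    and C_meas: "{(x, y). y \<in> C x} \<in> sets (N \<Otimes>\<^sub>M K)"
    and p_meas: "p \<in> borel_measurable N"
    and p_range: "\<And>x. p x \<in> {0..1}"
    and p_cond: "\<And>A. A \<in> sets N \<Longrightarrow>
        (\<integral>\<omega>. indicator A (X \<omega>) * indicator (C (X \<omega>)) (Y \<omega>) \<partial>M)
      = (\<integral>\<omega>. indicator A (X \<omega>) * p (X \<omega>) \<partial>M)"
    and alpha: "0 < \<alpha>" "\<alpha> < 1"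
    and f_convex: "convex_on {0..1} f"
    and f_nonneg: "\<And>q. q \<in> {0..1} \<Longrightarrow> f q \<ge> 0"
    and f_zero: "f (1 - \<alpha>) = 0"
    and f'_sub: "subderivative_on f f' {0..1}"
    and f'_zero: "f' (1 - \<alpha>) = 0"
    and integrable_risk: "integrable M (\<lambda>\<omega>. - f (p (X \<omega>))
          - (indicator (C (X \<omega>)) (Y \<omega>) - p (X \<omega>)) * f' (p (X \<omega>)))"
  shows "proper_score (\<lambda>q y. - f q - (y - q) * f' q)
    \<and> risk M X (\<lambda>\<omega>. indicator (C (X \<omega>)) (Y \<omega>)) (\<lambda>q y. - f q - (y - q) * f' q) (\<lambda>_. 1 - \<alpha>)
      - risk M X (\<lambda>\<omega>. indicator (C (X \<omega>)) (Y \<omega>)) (\<lambda>q y. - f q - (y - q) * f' q) p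
      = (\<integral>\<omega>. f (p (X \<omega>)) \<partial>M)"
proof -
  interpret prob_space M by fact
  let ?Z = "\<lambda>\<omega>. indicator (C (X \<omega>)) (Y \<omega>) :: real"
  let ?score = "\<lambda>q y. - f q - (y - q) * f' q"
  have Z_meas: "?Z \<in> borel_measurable M"
    using X_meas Y_meas C_meas by (rule borel_measurable_indicator_graph)
  have Z_range: "?Z \<omega> \<in> {0..1}" for \<omega>
    by (simp add: indicator_def)
  have f'_mono: "mono_on {0..1} f'"
    using f'_sub by (rule subderivative_on_mono)
  have f'p_meas: "(\<lambda>x. f' (p x)) \<in> borel_measurable N"
    using f'_mono p_meas p_range by (rule borel_measurable_mono_on_comp)
  have f'p_bound: "\<bar>f' (p x)\<bar> \<le> max \<bar>f' 0\<bar> \<bar>f' 1\<bar>" for x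
    using f'_mono p_range by (rule mono_on_abs_le_max)
  have residual_int: "integrable M (\<lambda>\<omega>. (?Z \<omega> - p (X \<omega>)) * f' (p (X \<omega>)))"
    and residual_zero: "(\<integral>\<omega>. (?Z \<omega> - p (X \<omega>)) * f' (p (X \<omega>)) \<partial>M) = 0"
    using residual_mult_conditional_mean[OF \<open>prob_space M\<close> X_meas Z_meas Z_range
        p_meas p_range p_cond f'p_meas f'p_bound]
    by simp_all
  have "risk M X ?Z ?score (\<lambda>_. 1 - \<alpha>) = 0"
    by (simp add: risk_def f_zero f'_zero)
  moreover have "risk M X ?Z ?score p = - (\<integral>\<omega>. f (p (X \<omega>)) \<partial>M)"
  proof -
    have "risk M X ?Z ?score p + (\<integral>\<omega>. (?Z \<omega> - p (X \<omega>)) * f' (p (X \<omega>)) \<partial>M)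
        = (\<integral>\<omega>. - f (p (X \<omega>)) \<partial>M)"
      unfolding risk_def using integrable_risk residual_int
      by (subst Bochner_Integration.integral_add[symmetric]) auto
    then show ?thesis
      using residual_zero by simp
  qed
  ultimately show ?thesis
    using proper_score_subgradient_score[OF f'_sub] by simp
qed

end
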